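(* Let $E$ be a directed graph and let the graph inverse semigroup $G(E)$ carry a Hausdorff topology $\tau$ making it a semitopological semigroup. The following are equivalent: (1) $(G(E),\tau)$ is compact; (2) it is countably compact; (3) it is feebly compact; (4) it is CLP-compact; (5) $(G(E),\tau)$ is topologically isomorphic to $(G(E),\tau_c)$.
   Context: All spaces are Hausdorff. A semitopological semigroup is a topological space with a separately continuous associative multiplication. A space is countably compact if every infinite subset has an accumulation point; feebly compact if every locally finite family of non-empty open sets is finite; CLP-compact if every cover by clopen sets has a finite subcover. A directed graph $E=(E^0,E^1,r,s)$ has vertices $E^0$, edges $E^1$, source/range maps $s,r:E^1\to E^0$; paths are vertices and sequences of edges $e_1\ldots e_n$ with $r(e_i)=s(e_{i+1})$. The graph inverse semigroup $G(E)$ is the semigroup with zero $0$ generated by $E^0$, $E^1$, $E^{-1}=\{e^{-1}\mid e\in E^1\}$ subject to: for $a,b\in E^0$, $e,f\in E^1$: $ab=a$ if $a=b$, else $0$; $s(e)e=er(e)=e$; $e^{-1}s(e)=r(e)e^{-1}=e^{-1}$; $e^{-1}f=r(e)$ if $e=f$, else $0$. The topology $\tau_c$ on $G(E)$: non-zero elements are isolated and the open neighborhoods of $0$ are the cofinite subsets containing $0$. *)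

theory Defs
  imports "HOL-Analysis.Analysis" "HOL-Library.Sublist"
begin

text \<open>A path is represented as a pair (a, es):
  es = [] encodes the vertex a (a path of length 0), otherwise es = e1...en is a
  sequence of edges with r(e_i) = s(e_(i+1)) and a = s(e1).\<close>

definition graph :: "'v set \<Rightarrow> 'e set \<Rightarrow> ('e \<Rightarrow> 'v) \<Rightarrow> ('e \<Rightarrow> 'v) \<Rightarrow> bool" where
  "graph V Ed s r \<longleftrightarrow> s ` Ed \<subseteq> V \<and> r ` Ed \<subseteq> V"

definition is_path :: "'v set \<Rightarrow> 'e set \<Rightarrow> ('e \<Rightarrow> 'v) \<Rightarrow> ('e \<Rightarrow> 'v) \<Rightarrow> 'v \<times> 'e list \<Rightarrow> bool" where
  "is_path V Ed s r p \<longleftrightarrow>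
     fst p \<in> V \<and> set (snd p) \<subseteq> Ed \<and>
     (snd p \<noteq> [] \<longrightarrow> s (hd (snd p)) = fst p) \<and>
     (\<forall>i. Suc i < length (snd p) \<longrightarrow> r (snd p ! i) = s (snd p ! Suc i))"

definition path_src :: "'v \<times> 'e list \<Rightarrow> 'v" where
  "path_src p = fst p"

definition path_rng :: "('e \<Rightarrow> 'v) \<Rightarrow> 'v \<times> 'e list \<Rightarrow> 'v" where
  "path_rng r p = (if snd p = [] then fst p else r (last (snd p)))"

definition path_prefix :: "'v \<times> 'e list \<Rightarrow> 'v \<times> 'e list \<Rightarrow> bool" where
  "path_prefix p q \<longleftrightarrow> fst p = fst q \<and> prefix (snd p) (snd q)"

definition path_rest :: "('e \<Rightarrow> 'v) \<Rightarrow> 'v \<times> 'e list \<Rightarrow> 'v \<times> 'e list \<Rightarrow> 'v \<times> 'e list" where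
  "path_rest r p q = (path_rng r p, drop (length (snd p)) (snd q))"

definition path_cat :: "'v \<times> 'e list \<Rightarrow> 'v \<times> 'e list \<Rightarrow> 'v \<times> 'e list" where
  "path_cat p q = (fst p, snd p @ snd q)"

text \<open>Elements of G(E): zero, and the elements u v^{-1} (GElt u v) with u, v paths,
  r(u) = r(v). This is the standard normal form of the graph inverse semigroup.\<close>

datatype ('v, 'e) gis = GZero | GElt "'v \<times> 'e list" "'v \<times> 'e list"

definition gis_carrier :: "'v set \<Rightarrow> 'e set \<Rightarrow> ('e \<Rightarrow> 'v) \<Rightarrow> ('e \<Rightarrow> 'v) \<Rightarrow> ('v, 'e) gis set" where
  "gis_carrier V Ed s r = insert GZero
     {GElt u v | u v. is_path V Ed s r u \<and> is_path V Ed s r v \<and> path_rng r u = path_rng r v}"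

text \<open>(u v^{-1})(w z^{-1}) = u w' z^{-1} if w = v w';  u (z v')^{-1} if v = w v';  0 otherwise.\<close>
fun gis_mult :: "('e \<Rightarrow> 'v) \<Rightarrow> ('v, 'e) gis \<Rightarrow> ('v, 'e) gis \<Rightarrow> ('v, 'e) gis" where
  "gis_mult r (GElt u v) (GElt w z) =
     (if path_prefix v w then GElt (path_cat u (path_rest r v w)) z
      else if path_prefix w v then GElt u (path_cat z (path_rest r w v))
      else GZero)"
| "gis_mult r _ _ = GZero"

text \<open>generators: vertex a = a a^{-1}, edge e = e r(e)^{-1}, e^{-1} = r(e) e^{-1}\<close>
definition gis_vertex :: "'v \<Rightarrow> ('v, 'e) gis" where
  "gis_vertex a = GElt (a, []) (a, [])"
definition gis_edge :: "('e \<Rightarrow> 'v) \<Rightarrow> ('e \<Rightarrow> 'v) \<Rightarrow> 'e \<Rightarrow> ('v, 'e) gis" where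
  "gis_edge s r e = GElt (s e, [e]) (r e, [])"
definition gis_edge_inv :: "('e \<Rightarrow> 'v) \<Rightarrow> ('e \<Rightarrow> 'v) \<Rightarrow> 'e \<Rightarrow> ('v, 'e) gis" where
  "gis_edge_inv s r e = GElt (r e, []) (s e, [e])"

definition semitopological :: "'a topology \<Rightarrow> ('a \<Rightarrow> 'a \<Rightarrow> 'a) \<Rightarrow> bool" where
  "semitopological T m \<longleftrightarrow>
     (\<forall>a\<in>topspace T. continuous_map T T (\<lambda>x. m a x) \<and> continuous_map T T (\<lambda>x. m x a))"

definition countably_compact_space :: "'a topology \<Rightarrow> bool" where
  "countably_compact_space T \<longleftrightarrow>
     (\<forall>A. A \<subseteq> topspace T \<and> infinite A \<longrightarrow> (\<exists>x\<in>topspace T. x \<in> T derived_set_of A))"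

definition feebly_compact_space :: "'a topology \<Rightarrow> bool" where
  "feebly_compact_space T \<longleftrightarrow>
     (\<forall>\<F>. (\<forall>U\<in>\<F>. openin T U \<and> U \<noteq> {}) \<and> locally_finite_in T \<F> \<longrightarrow> finite \<F>)"

definition clp_compact_space :: "'a topology \<Rightarrow> bool" where
  "clp_compact_space T \<longleftrightarrow>
     (\<forall>\<C>. (\<forall>U\<in>\<C>. openin T U \<and> closedin T U) \<and> topspace T \<subseteq> \<Union>\<C> \<longrightarrow>
        (\<exists>\<F>\<subseteq>\<C>. finite \<F> \<and> topspace T \<subseteq> \<Union>\<F>))"

definition tau_c :: "'v set \<Rightarrow> 'e set \<Rightarrow> ('e \<Rightarrow> 'v) \<Rightarrow> ('e \<Rightarrow> 'v) \<Rightarrow> ('v, 'e) gis topology" where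
  "tau_c V Ed s r = topology (\<lambda>U. U \<subseteq> gis_carrier V Ed s r \<and>
      (GZero \<in> U \<longrightarrow> finite (gis_carrier V Ed s r - U)))"

definition top_iso_semigroups ::
  "'a topology \<Rightarrow> ('a \<Rightarrow> 'a \<Rightarrow> 'a) \<Rightarrow> 'b topology \<Rightarrow> ('b \<Rightarrow> 'b \<Rightarrow> 'b) \<Rightarrow> bool" where
  "top_iso_semigroups T m T' m' \<longleftrightarrow>
     (\<exists>h. homeomorphic_map T T' h \<and>
          (\<forall>x\<in>topspace T. \<forall>y\<in>topspace T. h (m x y) = m' (h x) (h y)))"

lemma tau_c_Int:
  assumes a: "S \<subseteq> gis_carrier V Ed s r \<and> (GZero \<in> S \<longrightarrow> finite (gis_carrier V Ed s r - S))"
     and b: "T \<subseteq> gis_carrier V Ed s r \<and> (GZero \<in> T \<longrightarrow> finite (gis_carrier V Ed s r - T))"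
  shows "S \<inter> T \<subseteq> gis_carrier V Ed s r \<and> (GZero \<in> S \<inter> T \<longrightarrow> finite (gis_carrier V Ed s r - S \<inter> T))"
proof -
  have eq: "gis_carrier V Ed s r - (S \<inter> T) = (gis_carrier V Ed s r - S) \<union> (gis_carrier V Ed s r - T)" by blast
  show ?thesis
  proof
    show "S \<inter> T \<subseteq> gis_carrier V Ed s r" using a by blast
    show "GZero \<in> S \<inter> T \<longrightarrow> finite (gis_carrier V Ed s r - S \<inter> T)"
    proof
      assume z: "GZero \<in> S \<inter> T"
      then have "finite (gis_carrier V Ed s r - S)" "finite (gis_carrier V Ed s r - T)" using a b by blast+
      then show "finite (gis_carrier V Ed s r - S \<inter> T)" using eq by (simp only: finite_Un)
    qed
  qed
qed

lemma tau_c_Union: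
  assumes K: "\<forall>S\<in>K. S \<subseteq> gis_carrier V Ed s r \<and> (GZero \<in> S \<longrightarrow> finite (gis_carrier V Ed s r - S))"
  shows "\<Union>K \<subseteq> gis_carrier V Ed s r \<and> (GZero \<in> \<Union>K \<longrightarrow> finite (gis_carrier V Ed s r - \<Union>K))"
proof
  show "\<Union>K \<subseteq> gis_carrier V Ed s r" using K by blast
  show "GZero \<in> \<Union>K \<longrightarrow> finite (gis_carrier V Ed s r - \<Union>K)"
  proof
    assume "GZero \<in> \<Union>K"
    then obtain S where "S \<in> K" "GZero \<in> S" by blast
    then have "finite (gis_carrier V Ed s r - S)" using K by blast
    moreover have "gis_carrier V Ed s r - \<Union>K \<subseteq> gis_carrier V Ed s r - S" using \<open>S \<in> K\<close> by blast
    ultimately show "finite (gis_carrier V Ed s r - \<Union>K)" by (rule finite_subset[rotated])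
  qed
qed

lemma istopology_tau_c:
  "istopology (\<lambda>U. U \<subseteq> gis_carrier V Ed s r \<and> (GZero \<in> U \<longrightarrow> finite (gis_carrier V Ed s r - U)))"
  unfolding istopology_def
  apply (rule conjI)
   apply (intro allI impI)
   apply (erule (1) tau_c_Int)
  apply (intro allI impI)
  apply (erule tau_c_Union)
  done

lemma openin_tau_c:
  "openin (tau_c V Ed s r) U \<longleftrightarrow>
     U \<subseteq> gis_carrier V Ed s r \<and> (GZero \<in> U \<longrightarrow> finite (gis_carrier V Ed s r - U))"
  by (simp only: tau_c_def topology_inverse'[OF istopology_tau_c])

end

theory Submission
  imports Defs
begin

(* In a Hausdorff semitopological graph inverse semigroup every nonzero element is isolated.
   A vertex w is the only element y with e^-1 y ~= 0, e e^-1 y ~= y, y e ~= 0 and y e e^-1 ~= y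
   for an edge e leaving w (or with w y ~= 0 ~= y w if w is a sink), and by separate continuity
   each of these conditions defines an open set. A general element u v^-1 lies in the preimage of
   the isolated vertex r(u) under y |-> u^-1 y v, which is open and finite; a finite open set in
   a T1 space consists of isolated points.
   In a T1 space whose points other than 0 are isolated, compactness, countable compactness,
   feeble compactness and CLP-compactness each amount to every neighbourhood of 0 being cofinite,
   which says precisely that the topology is tau_c. *)

definition cofinite_nhds :: "'a topology \<Rightarrow> 'a \<Rightarrow> bool" where
  "cofinite_nhds X z \<longleftrightarrow> (\<forall>U. openin X U \<and> z \<in> U \<longrightarrow> finite (topspace X - U))"

lemma compact_space_if_cofinite_nhds:
  assumes "z \<in> topspace X" "cofinite_nhds X z"
  shows "compact_space X"
  unfolding compact_space_alt
proof (intro allI impI)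
  fix \<U> assume \<U>: "(\<forall>U\<in>\<U>. openin X U) \<and> topspace X \<subseteq> \<Union>\<U>"
  then obtain U0 where U0: "U0 \<in> \<U>" "z \<in> U0" using assms(1) by blast
  then have fin: "finite (topspace X - U0)" using \<U> assms(2) unfolding cofinite_nhds_def by blast
  have "\<forall>x\<in>topspace X - U0. \<exists>U\<in>\<U>. x \<in> U" using \<U> by blast
  then obtain g where g: "\<forall>x\<in>topspace X - U0. g x \<in> \<U> \<and> x \<in> g x" by metis
  show "\<exists>\<F>. finite \<F> \<and> \<F> \<subseteq> \<U> \<and> topspace X \<subseteq> \<Union>\<F>"
    by (rule exI[of _ "insert U0 (g ` (topspace X - U0))"]) (use fin g U0 in auto)
qed

lemma countably_compact_space_if_compact_space:
  "compact_space X \<Longrightarrow> countably_compact_space X"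
  unfolding countably_compact_space_def
  by (metis compact_space_imp_Bolzano_Weierstrass derived_set_of_subset_topspace subset_empty subset_eq)

lemma clp_compact_space_if_compact_space:
  assumes "compact_space X"
  shows "clp_compact_space X"
  unfolding clp_compact_space_def
proof (intro allI impI)
  fix \<C> assume "(\<forall>U\<in>\<C>. openin X U \<and> closedin X U) \<and> topspace X \<subseteq> \<Union>\<C>"
  then have "(\<forall>U\<in>\<C>. openin X U) \<and> topspace X \<subseteq> \<Union>\<C>" by blast
  then obtain \<F> where "finite \<F>" "\<F> \<subseteq> \<C>" "topspace X \<subseteq> \<Union>\<F>"
    using assms unfolding compact_space_alt by meson
  then show "\<exists>\<F>\<subseteq>\<C>. finite \<F> \<and> topspace X \<subseteq> \<Union>\<F>" by blast
qed

lemma feebly_compact_space_if_cofinite_nhds: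
  assumes "z \<in> topspace X" "cofinite_nhds X z"
  shows "feebly_compact_space X"
  unfolding feebly_compact_space_def
proof (intro allI impI)
  fix \<F> assume \<F>: "(\<forall>U\<in>\<F>. openin X U \<and> U \<noteq> {}) \<and> locally_finite_in X \<F>"
  then obtain V where V: "openin X V" "z \<in> V" "finite {U \<in> \<F>. U \<inter> V \<noteq> {}}"
    unfolding locally_finite_in_def using assms(1) by blast
  have "finite (topspace X - V)" using assms(2) V unfolding cofinite_nhds_def by blast
  moreover have "\<F> \<subseteq> {U \<in> \<F>. U \<inter> V \<noteq> {}} \<union> Pow (topspace X - V)"
    using \<F> by (auto dest: openin_subset)
  ultimately show "finite \<F>" using V(3) by (meson finite_Pow_iff finite_UnI finite_subset)
qed

lemma openin_if_avoids_point:
  assumes "\<forall>x\<in>topspace X - {z}. openin X {x}" "S \<subseteq> topspace X" "z \<notin> S"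
  shows "openin X S"
proof (subst openin_subopen, intro ballI)
  fix x assume "x \<in> S"
  then have "openin X {x}" using assms by blast
  then show "\<exists>T. openin X T \<and> x \<in> T \<and> T \<subseteq> S" using \<open>x \<in> S\<close> by blast
qed

lemma cofinite_nhds_if_countably_compact_space:
  assumes iso: "\<forall>x\<in>topspace X - {z}. openin X {x}" and cc: "countably_compact_space X"
  shows "cofinite_nhds X z"
  unfolding cofinite_nhds_def
proof (intro allI impI)
  fix U assume U: "openin X U \<and> z \<in> U"
  show "finite (topspace X - U)"
  proof (rule ccontr)
    assume "infinite (topspace X - U)"
    then obtain x where "x \<in> X derived_set_of (topspace X - U)"
      using cc[unfolded countably_compact_space_def, rule_format, of "topspace X - U"] by blast
    then have x: "x \<in> topspace X"
      "\<And>W. x \<in> W \<Longrightarrow> openin X W \<Longrightarrow> \<exists>y. y \<noteq> x \<and> y \<in> topspace X - U \<and> y \<in> W"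
      unfolding in_derived_set_of by blast+
    show False
    proof (cases "x = z")
      case True
      then show False using x(2)[of U] U by blast
    next
      case False
      then show False using x(2)[of "{x}"] iso x(1) by blast
    qed
  qed
qed

lemma compact_space_iff_cofinite_nhds:
  assumes "z \<in> topspace X" "\<forall>x\<in>topspace X - {z}. openin X {x}"
  shows "compact_space X \<longleftrightarrow> cofinite_nhds X z"
  using compact_space_if_cofinite_nhds[OF assms(1)] countably_compact_space_if_compact_space
    cofinite_nhds_if_countably_compact_space[OF assms(2)] by blast

lemma cofinite_nhds_if_feebly_compact_space:
  assumes iso: "\<forall>x\<in>topspace X - {z}. openin X {x}" and fc: "feebly_compact_space X"
  shows "cofinite_nhds X z"
  unfolding cofinite_nhds_def
proof (intro allI impI)
  fix U assume U: "openin X U \<and> z \<in> U"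
  define \<F> where "\<F> = (\<lambda>x. {x}) ` (topspace X - U)"
  have "\<forall>W\<in>\<F>. openin X W \<and> W \<noteq> {}" unfolding \<F>_def using iso U by auto
  moreover have "locally_finite_in X \<F>"
    unfolding locally_finite_in_def
  proof (intro conjI ballI)
    show "\<Union>\<F> \<subseteq> topspace X" unfolding \<F>_def by auto
    fix x assume x: "x \<in> topspace X"
    show "\<exists>V. openin X V \<and> x \<in> V \<and> finite {W \<in> \<F>. W \<inter> V \<noteq> {}}"
    proof (cases "x = z")
      case True
      have "{W \<in> \<F>. W \<inter> U \<noteq> {}} = {}" unfolding \<F>_def by auto
      then show ?thesis using U True by (metis finite.emptyI)
    next
      case False
      have "{W \<in> \<F>. W \<inter> {x} \<noteq> {}} \<subseteq> {{x}}" unfolding \<F>_def by auto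
      then show ?thesis using iso x False by (metis finite.emptyI finite_insert finite_subset insertI1 Diff_iff singletonD)
    qed
  qed
  ultimately have "finite \<F>" using fc unfolding feebly_compact_space_def by blast
  then show "finite (topspace X - U)" unfolding \<F>_def by (rule finite_imageD) (simp add: inj_on_def)
qed

lemma cofinite_nhds_if_clp_compact_space:
  assumes "t1_space X" and iso: "\<forall>x\<in>topspace X - {z}. openin X {x}"
    and clp: "clp_compact_space X"
  shows "cofinite_nhds X z"
  unfolding cofinite_nhds_def
proof (intro allI impI)
  fix U assume U: "openin X U \<and> z \<in> U"
  define \<C> where "\<C> = insert U ((\<lambda>x. {x}) ` (topspace X - U))"
  have "closedin X U"
    using U openin_if_avoids_point[OF iso, of "topspace X - U"] by (simp add: closedin_def openin_subset)
  moreover have "openin X {x} \<and> closedin X {x}" if "x \<in> topspace X - U" for x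
    using that U iso closedin_t1_singleton[OF \<open>t1_space X\<close>] by blast
  ultimately have "\<forall>W\<in>\<C>. openin X W \<and> closedin X W" unfolding \<C>_def using U by blast
  moreover have "topspace X \<subseteq> \<Union>\<C>" unfolding \<C>_def by auto
  ultimately obtain \<F> where \<F>: "\<F> \<subseteq> \<C>" "finite \<F>" "topspace X \<subseteq> \<Union>\<F>"
    using clp unfolding clp_compact_space_def by meson
  have "topspace X - U \<subseteq> \<Union>(\<F> - {U})" using \<F>(3) by blast
  moreover have "finite (\<Union>(\<F> - {U}))" using \<F>(1,2) unfolding \<C>_def by auto
  ultimately show "finite (topspace X - U)" by (rule finite_subset)
qed

lemma openin_iff_if_cofinite_nhds:
  assumes "t1_space X" "\<forall>x\<in>topspace X - {z}. openin X {x}" "cofinite_nhds X z"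
  shows "openin X U \<longleftrightarrow> U \<subseteq> topspace X \<and> (z \<in> U \<longrightarrow> finite (topspace X - U))"
proof
  assume "openin X U"
  then show "U \<subseteq> topspace X \<and> (z \<in> U \<longrightarrow> finite (topspace X - U))"
    using assms(3) openin_subset unfolding cofinite_nhds_def by blast
next
  assume U: "U \<subseteq> topspace X \<and> (z \<in> U \<longrightarrow> finite (topspace X - U))"
  show "openin X U"
  proof (cases "z \<in> U")
    case True
    then have "closedin X (topspace X - U)"
      using U assms(1) t1_space_closedin_finite by blast
    then show ?thesis using U by (metis Diff_Diff_Int inf.absorb2 openin_closedin_eq)
  qed (use U openin_if_avoids_point[OF assms(2)] in blast)
qed

lemma openin_preimage_neq:
  assumes "t1_space Y" "continuous_map X Y g" "c \<in> topspace Y"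
  shows "openin X {y \<in> topspace X. g y \<noteq> c}"
proof -
  have "openin Y (topspace Y - {c})"
    using closedin_t1_singleton[OF assms(1,3)] by (simp add: closedin_def)
  then have "openin X {y \<in> topspace X. g y \<in> topspace Y - {c}}"
    using assms(2) openin_continuous_map_preimage by blast
  moreover have "{y \<in> topspace X. g y \<in> topspace Y - {c}} = {y \<in> topspace X. g y \<noteq> c}"
    using continuous_map_image_subset_topspace[OF assms(2)] by auto
  ultimately show ?thesis by simp
qed

lemma openin_non_fixed_points:
  assumes "Hausdorff_space X" "continuous_map X X g"
  shows "openin X {y \<in> topspace X. g y \<noteq> y}"
proof -
  have "closedin X {y \<in> topspace X. g y = id y}"
    using closedin_continuous_maps_eq[OF assms continuous_map_id] .
  then have "openin X (topspace X - {y \<in> topspace X. g y = y})" by (simp add: closedin_def)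
  moreover have "topspace X - {y \<in> topspace X. g y = y} = {y \<in> topspace X. g y \<noteq> y}" by auto
  ultimately show ?thesis by simp
qed

lemma openin_singleton_if_finite_nhd:
  assumes "t1_space X" "openin X U" "finite U" "x \<in> U"
  shows "openin X {x}"
proof -
  have "closedin X (U - {x})"
    using assms openin_subset t1_space_closedin_finite by (metis Diff_subset finite_Diff subset_trans)
  with assms(2) have "openin X (U - (U - {x}))" by (rule openin_diff)
  moreover have "U - (U - {x}) = {x}" using assms(4) by blast
  ultimately show ?thesis by simp
qed

definition gis_path :: "('e \<Rightarrow> 'v) \<Rightarrow> 'v \<times> 'e list \<Rightarrow> ('v, 'e) gis" where
  "gis_path r p = GElt p (path_rng r p, [])"

definition gis_path_inv :: "('e \<Rightarrow> 'v) \<Rightarrow> 'v \<times> 'e list \<Rightarrow> ('v, 'e) gis" where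
  "gis_path_inv r p = GElt (path_rng r p, []) p"

lemma path_rng_in_vertices:
  assumes "graph V Ed s r" "is_path V Ed s r p"
  shows "path_rng r p \<in> V"
proof (cases "snd p = []")
  case False
  then have "last (snd p) \<in> Ed" using assms(2) unfolding is_path_def by auto
  then show ?thesis using False assms(1) by (auto simp: graph_def path_rng_def)
qed (use assms(2) in \<open>simp add: is_path_def path_rng_def\<close>)

lemma is_path_vertex: "w \<in> V \<Longrightarrow> is_path V Ed s r (w, [])"
  by (simp add: is_path_def)

lemma is_path_edge: "graph V Ed s r \<Longrightarrow> f \<in> Ed \<Longrightarrow> is_path V Ed s r (s f, [f])"
  by (auto simp: graph_def is_path_def)

lemma GElt_in_gis_carrier:
  "is_path V Ed s r u \<Longrightarrow> is_path V Ed s r v \<Longrightarrow> path_rng r u = path_rng r v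
    \<Longrightarrow> GElt u v \<in> gis_carrier V Ed s r"
  unfolding gis_carrier_def by blast

lemma gis_vertex_in_carrier: "w \<in> V \<Longrightarrow> gis_vertex w \<in> gis_carrier V Ed s r"
  unfolding gis_vertex_def by (rule GElt_in_gis_carrier) (simp_all add: is_path_vertex)

lemma gis_edge_in_carrier:
  assumes "graph V Ed s r" "f \<in> Ed"
  shows "gis_edge s r f \<in> gis_carrier V Ed s r" "gis_edge_inv s r f \<in> gis_carrier V Ed s r"
proof -
  have "r f \<in> V" using assms by (auto simp: graph_def)
  then show "gis_edge s r f \<in> gis_carrier V Ed s r" "gis_edge_inv s r f \<in> gis_carrier V Ed s r"
    unfolding gis_edge_def gis_edge_inv_def
    by (auto intro!: GElt_in_gis_carrier is_path_vertex is_path_edge[OF assms] simp: path_rng_def)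
qed

lemma gis_path_in_carrier:
  assumes "graph V Ed s r" "is_path V Ed s r p"
  shows "gis_path r p \<in> gis_carrier V Ed s r" "gis_path_inv r p \<in> gis_carrier V Ed s r"
proof -
  have "is_path V Ed s r (path_rng r p, [])"
    using is_path_vertex path_rng_in_vertices[OF assms] .
  then show "gis_path r p \<in> gis_carrier V Ed s r" "gis_path_inv r p \<in> gis_carrier V Ed s r"
    unfolding gis_path_def gis_path_inv_def
    by (auto intro!: GElt_in_gis_carrier assms(2) simp: path_rng_def)
qed

lemma eq_gis_vertex_if_edge_products:
  assumes "gis_mult r (gis_edge_inv s r f) y \<noteq> GZero"
    and "gis_mult r (gis_mult r (gis_edge s r f) (gis_edge_inv s r f)) y \<noteq> y"
    and "gis_mult r y (gis_edge s r f) \<noteq> GZero"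
    and "gis_mult r y (gis_mult r (gis_edge s r f) (gis_edge_inv s r f)) \<noteq> y"
  shows "y = gis_vertex (s f)"
proof -
  obtain a ps b qs where y: "y = GElt (a, ps) (b, qs)" using assms(1) by (cases y) auto
  show ?thesis using assms unfolding y
    by (cases ps; cases qs)
      (auto simp: gis_edge_def gis_edge_inv_def gis_vertex_def path_prefix_def path_cat_def
        path_rest_def path_rng_def split: if_splits)
qed

lemma eq_gis_vertex_if_sink:
  assumes "y \<in> gis_carrier V Ed s r" "\<forall>f\<in>Ed. s f \<noteq> w"
    and "gis_mult r (gis_vertex w) y \<noteq> GZero" "gis_mult r y (gis_vertex w) \<noteq> GZero"
  shows "y = gis_vertex w"
proof -
  obtain a ps b qs where y: "y = GElt (a, ps) (b, qs)"
    and paths: "is_path V Ed s r (a, ps)" "is_path V Ed s r (b, qs)"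
    using assms(1,3) unfolding gis_carrier_def by auto
  show ?thesis using assms(2-4) paths unfolding y
    by (cases ps; cases qs)
      (auto simp: gis_vertex_def is_path_def path_prefix_def path_cat_def path_rest_def split: if_splits)
qed

lemma gis_path_inv_mult_mult_gis_path:
  assumes "path_rng r u = path_rng r v"
  shows "gis_mult r (gis_mult r (gis_path_inv r u) (GElt u v)) (gis_path r v) = gis_vertex (path_rng r u)"
  using assms by (auto simp: gis_path_def gis_path_inv_def gis_vertex_def path_prefix_def path_cat_def path_rest_def)

lemma path_prefixes_if_gis_path_inv_mult_mult_gis_path:
  assumes "gis_mult r (gis_mult r (gis_path_inv r u) (GElt p q)) (gis_path r v) = gis_vertex w"
  shows "path_prefix p u \<and> path_prefix q v"
  using assms
  by (auto simp: gis_path_def gis_path_inv_def gis_vertex_def path_prefix_def path_cat_def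
      path_rest_def prefix_def split: if_splits; metis)

lemma finite_path_prefixes: "finite {p. path_prefix p u}"
proof (rule finite_subset)
  show "{p. path_prefix p u} \<subseteq> {fst u} \<times> set (prefixes (snd u))"
    by (auto simp: path_prefix_def)
qed simp

lemma topspace_tau_c: "topspace (tau_c V Ed s r) = gis_carrier V Ed s r"
proof -
  have "openin (tau_c V Ed s r) (gis_carrier V Ed s r)" by (simp add: openin_tau_c)
  then have "gis_carrier V Ed s r \<subseteq> topspace (tau_c V Ed s r)" by (rule openin_subset)
  moreover have "topspace (tau_c V Ed s r) \<subseteq> gis_carrier V Ed s r"
    using openin_topspace[of "tau_c V Ed s r"] by (simp only: openin_tau_c)
  ultimately show ?thesis by blast
qed

lemma cofinite_nhds_tau_c: "cofinite_nhds (tau_c V Ed s r) GZero"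
  unfolding cofinite_nhds_def topspace_tau_c openin_tau_c by blast

lemma compact_space_tau_c: "compact_space (tau_c V Ed s r)"
  by (rule compact_space_if_cofinite_nhds[OF _ cofinite_nhds_tau_c])
    (simp add: topspace_tau_c gis_carrier_def)

locale gis_semitopological =
  fixes V :: "'v set" and Ed :: "'e set" and s r :: "'e \<Rightarrow> 'v"
    and T :: "('v, 'e) gis topology"
  assumes graph: "graph V Ed s r"
    and topspace: "topspace T = gis_carrier V Ed s r"
    and Hausdorff: "Hausdorff_space T"
    and semitopological: "semitopological T (gis_mult r)"
begin

lemma t1: "t1_space T"
  using Hausdorff by (rule Hausdorff_imp_t1_space)

lemma continuous_map_mult_left: "a \<in> topspace T \<Longrightarrow> continuous_map T T (gis_mult r a)"
  using semitopological unfolding semitopological_def by blast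

lemma continuous_map_mult_right: "a \<in> topspace T \<Longrightarrow> continuous_map T T (\<lambda>y. gis_mult r y a)"
  using semitopological unfolding semitopological_def by blast

lemma GZero_in_topspace: "GZero \<in> topspace T"
  by (simp add: topspace gis_carrier_def)

lemma openin_mult_left_neq:
  "a \<in> topspace T \<Longrightarrow> c \<in> topspace T \<Longrightarrow> openin T {y \<in> topspace T. gis_mult r a y \<noteq> c}"
  by (rule openin_preimage_neq[OF t1 continuous_map_mult_left])

lemma openin_mult_right_neq:
  "a \<in> topspace T \<Longrightarrow> c \<in> topspace T \<Longrightarrow> openin T {y \<in> topspace T. gis_mult r y a \<noteq> c}"
  by (rule openin_preimage_neq[OF t1 continuous_map_mult_right])

lemma openin_gis_vertex_source:
  assumes f: "f \<in> Ed"
  shows "openin T {gis_vertex (s f)}"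
proof -
  define e where "e = gis_edge s r f"
  define e' where "e' = gis_edge_inv s r f"
  define ee' where "ee' = gis_mult r e e'"
  have "ee' = GElt (s f, [f]) (s f, [f])"
    by (simp add: ee'_def e_def e'_def gis_edge_def gis_edge_inv_def path_prefix_def path_cat_def
        path_rest_def path_rng_def)
  then have inT: "e \<in> topspace T" "e' \<in> topspace T" "ee' \<in> topspace T"
    unfolding e_def e'_def topspace using gis_edge_in_carrier[OF graph f] is_path_edge[OF graph f]
    by (auto intro: GElt_in_gis_carrier)
  define N where "N = {y \<in> topspace T. gis_mult r e' y \<noteq> GZero} \<inter> {y \<in> topspace T. gis_mult r ee' y \<noteq> y}
     \<inter> {y \<in> topspace T. gis_mult r y e \<noteq> GZero} \<inter> {y \<in> topspace T. gis_mult r y ee' \<noteq> y}"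
  have "openin T N" unfolding N_def
    by (intro openin_Int openin_mult_left_neq openin_mult_right_neq GZero_in_topspace inT
        openin_non_fixed_points[OF Hausdorff] continuous_map_mult_left continuous_map_mult_right)
  moreover have "N = {gis_vertex (s f)}"
  proof
    show "N \<subseteq> {gis_vertex (s f)}"
      using eq_gis_vertex_if_edge_products[of r s f] unfolding N_def e_def e'_def ee'_def by auto
    have "s f \<in> V" using graph f by (auto simp: graph_def)
    then show "{gis_vertex (s f)} \<subseteq> N"
      using gis_vertex_in_carrier unfolding N_def e_def e'_def ee'_def topspace
      by (auto simp: gis_vertex_def gis_edge_def gis_edge_inv_def path_prefix_def path_cat_def
          path_rest_def path_rng_def)
  qed
  ultimately show ?thesis by simp
qed

lemma openin_gis_vertex_sink:
  assumes "w \<in> V" "\<forall>f\<in>Ed. s f \<noteq> w"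
  shows "openin T {gis_vertex w}"
proof -
  have wT: "gis_vertex w \<in> topspace T" using gis_vertex_in_carrier[OF assms(1)] topspace by simp
  define N where "N = {y \<in> topspace T. gis_mult r (gis_vertex w) y \<noteq> GZero}
     \<inter> {y \<in> topspace T. gis_mult r y (gis_vertex w) \<noteq> GZero}"
  have "openin T N" unfolding N_def
    by (intro openin_Int openin_mult_left_neq openin_mult_right_neq GZero_in_topspace wT)
  moreover have "N = {gis_vertex w}"
  proof
    show "N \<subseteq> {gis_vertex w}"
      using eq_gis_vertex_if_sink[of _ V Ed s r w] assms(2) unfolding N_def topspace by auto
    show "{gis_vertex w} \<subseteq> N"
      using wT unfolding N_def
      by (auto simp: gis_vertex_def path_prefix_def path_cat_def path_rest_def path_rng_def)
  qed
  ultimately show ?thesis by simp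
qed

lemma openin_gis_vertex: "w \<in> V \<Longrightarrow> openin T {gis_vertex w}"
  using openin_gis_vertex_source openin_gis_vertex_sink by blast

lemma openin_singleton_nonzero:
  assumes x: "x \<in> topspace T" "x \<noteq> GZero"
  shows "openin T {x}"
proof -
  obtain u v where uv: "x = GElt u v" "is_path V Ed s r u" "is_path V Ed s r v"
    "path_rng r u = path_rng r v"
    using x unfolding topspace gis_carrier_def by auto
  define w where "w = path_rng r u"
  define g where "g = (\<lambda>y. gis_mult r (gis_mult r (gis_path_inv r u) y) (gis_path r v))"
  have "gis_path_inv r u \<in> topspace T" "gis_path r v \<in> topspace T"
    using gis_path_in_carrier[OF graph uv(2)] gis_path_in_carrier[OF graph uv(3)] topspace by simp_all
  then have "continuous_map T T g"
    unfolding g_def using continuous_map_compose[OF continuous_map_mult_left continuous_map_mult_right]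
    by (simp add: o_def)
  moreover have "w \<in> V" unfolding w_def using path_rng_in_vertices[OF graph uv(2)] .
  ultimately have "openin T {y \<in> topspace T. g y \<in> {gis_vertex w}}"
    using openin_gis_vertex openin_continuous_map_preimage by blast
  moreover have "finite {y \<in> topspace T. g y \<in> {gis_vertex w}}"
  proof (rule finite_subset)
    show "{y \<in> topspace T. g y \<in> {gis_vertex w}} \<subseteq> (\<lambda>(p, q). GElt p q) ` ({p. path_prefix p u} \<times> {q. path_prefix q v})"
    proof
      fix y assume y: "y \<in> {y \<in> topspace T. g y \<in> {gis_vertex w}}"
      then obtain p q where "y = GElt p q" by (cases y) (auto simp: g_def gis_path_inv_def gis_vertex_def)
      with y show "y \<in> (\<lambda>(p, q). GElt p q) ` ({p. path_prefix p u} \<times> {q. path_prefix q v})"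
        using path_prefixes_if_gis_path_inv_mult_mult_gis_path[of r u p q v w] unfolding g_def by auto
    qed
  qed (simp add: finite_path_prefixes)
  moreover have "x \<in> {y \<in> topspace T. g y \<in> {gis_vertex w}}"
    using x(1) gis_path_inv_mult_mult_gis_path[OF uv(4)] unfolding g_def w_def uv(1) by simp
  ultimately show ?thesis by (rule openin_singleton_if_finite_nhd[OF t1])
qed

lemma isolated_nonzero: "\<forall>x\<in>topspace T - {GZero}. openin T {x}"
  using openin_singleton_nonzero by blast

lemma top_iso_tau_c_iff_cofinite_nhds:
  "top_iso_semigroups T (gis_mult r) (tau_c V Ed s r) (gis_mult r) \<longleftrightarrow> cofinite_nhds T GZero"
proof
  assume "top_iso_semigroups T (gis_mult r) (tau_c V Ed s r) (gis_mult r)"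
  then have "T homeomorphic_space tau_c V Ed s r"
    unfolding top_iso_semigroups_def using homeomorphic_map_imp_homeomorphic_space by blast
  then show "cofinite_nhds T GZero"
    using compact_space_iff_cofinite_nhds[OF GZero_in_topspace isolated_nonzero]
      homeomorphic_compact_space compact_space_tau_c by blast
next
  assume "cofinite_nhds T GZero"
  then have "T = tau_c V Ed s r"
    using openin_iff_if_cofinite_nhds[OF t1 isolated_nonzero]
    unfolding topology_eq openin_tau_c topspace by blast
  then show "top_iso_semigroups T (gis_mult r) (tau_c V Ed s r) (gis_mult r)"
    unfolding top_iso_semigroups_def by (intro exI[of _ id]) simp
qed

end

theorem corollary2p2:
  fixes V :: "'v set" and Ed :: "'e set" and s r :: "'e \<Rightarrow> 'v"
    and T :: "('v, 'e) gis topology"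
  assumes "graph V Ed s r"
    and "topspace T = gis_carrier V Ed s r"
    and "Hausdorff_space T"
    and "semitopological T (gis_mult r)"
  shows "(compact_space T \<longleftrightarrow> countably_compact_space T)
       \<and> (countably_compact_space T \<longleftrightarrow> feebly_compact_space T)
       \<and> (feebly_compact_space T \<longleftrightarrow> clp_compact_space T)
       \<and> (clp_compact_space T \<longleftrightarrow> top_iso_semigroups T (gis_mult r) (tau_c V Ed s r) (gis_mult r))"
proof -
  interpret gis_semitopological V Ed s r T using assms by unfold_locales
  note z = GZero_in_topspace and iso = isolated_nonzero
  show ?thesis
    using compact_space_iff_cofinite_nhds[OF z iso] top_iso_tau_c_iff_cofinite_nhds
      countably_compact_space_if_compact_space cofinite_nhds_if_countably_compact_space[OF iso]
      feebly_compact_space_if_cofinite_nhds[OF z] cofinite_nhds_if_feebly_compact_space[OF iso]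
      clp_compact_space_if_compact_space cofinite_nhds_if_clp_compact_space[OF t1 iso]
    by blast
qed

end
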